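(* Let $\Phi=\{X_i\}$ be a homogeneous Poisson point process of intensity $\lambda$ on $\mathbb{R}^2$ with receivers $y_i=X_i+r_i$, $|r_i|=r$, angles i.i.d. uniform and independent of $\Phi$, and let $b_{ij}=|X_i-y_j|^{\beta}/(Tr^{\beta})$ with $\beta>2$, $T>0$. For a bounded window $A\subset\mathbb{R}^2$, let $\{p_i^A: X_i\in A\}$ be the solution of problem $\mathbf{PF}^A$, i.e. the unique solution of: for each $X_i\in A$, $p_i^A$ solves $\frac1{p_i}=\sum_{j:X_j\in A,\,j\ne i}\frac{1}{1+b_{ij}-p_i}$ if $\sum_{j:X_j\in A,\,j\ne i}1/b_{ij}>1$, and $p_i^A=1$ otherwise. Then for any given $X_i\in\Phi$, as $A$ increases to $\mathbb{R}^2$, $p_i^A$ converges to $p_i^{\mathbb{R}^2}$, the unique solution in $p_i$ of $\frac1{p_i}=\sum_{j\ne i}\frac{1}{1+b_{ij}-p_i}$ (sum over all $j\ne i$) if $\sum_{j\ne i}1/b_{ij}>1$, and $p_i^{\mathbb{R}^2}=1$ otherwise.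
   Context: Problem $\mathbf{PF}^A$: for the finitely many transmitters $X_i\in A$, maximize $\sum_{X_i\in A}\log(p_iq_i)$ over $0\le p_i\le1$, where $q_i=e^{-\mu Tr^{\beta}W}\prod_{j\ne i}(1-p_j/(1+b_{ji}))$ is the conditional probability that $\mathrm{SINR}_i=F_i^ir^{-\beta}/(\sum_{j\ne i}|X_j-y_i|^{-\beta}F_j^ie_j+W)\ge T$ given the geometry (Rayleigh fading with mean $1/\mu$, independent Aloha access indicators with probabilities $p_j$). Its unique solution is characterized by the fixed-point equations stated in the claim. *)

theory Defs
  imports "HOL-Probability.Probability"
begin

text \<open>The plane R^2 is modelled as the type complex (Euclidean norm cmod).
A point of an independently marked point process is a pair (x, theta):
a transmitter position x and its receiver angle theta.\<close>

definition poisson_point_process ::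
  "'w measure \<Rightarrow> 'a measure \<Rightarrow> ('w \<Rightarrow> 'a set) \<Rightarrow> bool" where
  "poisson_point_process M nu Psi \<longleftrightarrow>
     prob_space M \<and>
     (\<forall>B \<in> sets nu. emeasure nu B < \<infinity> \<longrightarrow>
        (\<lambda>w. card (Psi w \<inter> B)) \<in> measurable M (count_space UNIV) \<and>
        {w \<in> space M. finite (Psi w \<inter> B)} \<in> sets M \<and>
        measure M {w \<in> space M. finite (Psi w \<inter> B)} = 1 \<and>
        (\<forall>k::nat. measure M {w \<in> space M. finite (Psi w \<inter> B) \<and> card (Psi w \<inter> B) = k}
                  = (measure nu B) ^ k / fact k * exp (- measure nu B))) \<and>
     (\<forall>(I::nat set) (Bs :: nat \<Rightarrow> 'a set).
        finite I \<and> disjoint_family_on Bs I \<and>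
        (\<forall>i\<in>I. Bs i \<in> sets nu \<and> emeasure nu (Bs i) < \<infinity>) \<longrightarrow>
        prob_space.indep_vars M (\<lambda>_. count_space UNIV) (\<lambda>i w. card (Psi w \<inter> Bs i)) I)"

text \<open>Intensity measure of the independently marked homogeneous PPP:
lambda * Lebesgue on the plane, times the uniform law of the angle on [0, 2 pi).\<close>

definition marked_intensity :: "real \<Rightarrow> (complex \<times> real) measure" where
  "marked_intensity lam =
     density (lborel :: (complex \<times> real) measure)
       (\<lambda>(x, th). ennreal (lam / (2 * pi) * indicator {0..<2 * pi} th))"

definition receiver :: "real \<Rightarrow> complex \<times> real \<Rightarrow> complex" where
  "receiver r j = fst j + complex_of_real r * cis (snd j)"

definition bcoef :: "real \<Rightarrow> real \<Rightarrow> real \<Rightarrow> complex \<times> real \<Rightarrow> complex \<times> real \<Rightarrow> real" where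
  "bcoef r beta T i j = (cmod (fst i - receiver r j)) powr beta / (T * r powr beta)"

definition pA :: "real \<Rightarrow> real \<Rightarrow> real \<Rightarrow> (complex \<times> real) set \<Rightarrow> complex set
                   \<Rightarrow> complex \<times> real \<Rightarrow> real" where
  "pA r beta T S A i =
     (let J = {j \<in> S. fst j \<in> A} - {i} in
      if (\<Sum>j\<in>J. 1 / bcoef r beta T i j) > 1
      then (THE p. 0 < p \<and> p \<le> 1 \<and> 1 / p = (\<Sum>j\<in>J. 1 / (1 + bcoef r beta T i j - p)))
      else 1)"

definition pR2 :: "real \<Rightarrow> real \<Rightarrow> real \<Rightarrow> (complex \<times> real) set
                   \<Rightarrow> complex \<times> real \<Rightarrow> real" where
  "pR2 r beta T S i =
     (let J = S - {i} in
      if (\<Sum>\<^sub>\<infinity>j\<in>J. 1 / bcoef r beta T i j) > 1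
      then (THE p. 0 < p \<and> p \<le> 1 \<and> 1 / p = (\<Sum>\<^sub>\<infinity>j\<in>J. 1 / (1 + bcoef r beta T i j - p)))
      else 1)"

end

theory Submission
  imports Defs
begin

text \<open>In \<open>1/p = \<Sum>\<^sub>j 1/(1 + b\<^sub>j - p)\<close> the left side
decreases and the right side increases in \<open>p\<close>, so there is exactly one root in \<open>(0,1)\<close> when
\<open>\<Sum>\<^sub>j 1/b\<^sub>j > 1\<close>, and the root lies above every \<open>q\<close> where the right side is at most the left
and below every \<open>q\<close> where it is larger. Enlarging the window only increases the right side, and
on the whole plane it is the limit of the window sums, so the window roots converge to the full
root as soon as \<open>\<Sum>\<^sub>j 1/b\<^sub>j < \<infinity>\<close>. Since \<open>b\<^sub>j\<close> grows like \<open>|X\<^sub>j|\<^sup>\<beta>\<close>, this holds for every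
locally finite configuration whose counts \<open>N\<^sub>m\<close> in the discs of radius \<open>2\<^sup>m\<close> satisfy
\<open>\<Sum>\<^sub>m 2\<^bsup>-\<beta> m\<^esup> N\<^sub>m < \<infinity>\<close>. For a Poisson process \<open>E N\<^sub>m = O(4\<^sup>m)\<close> and \<open>\<beta> > 2\<close>, so this weighted
count has finite mean and is almost surely finite.\<close>

definition pf_sum :: "('a \<Rightarrow> real) \<Rightarrow> 'a set \<Rightarrow> real \<Rightarrow> real" where
  "pf_sum b K p = (\<Sum>\<^sub>\<infinity>j\<in>K. 1 / (1 + b j - p))"

definition pf_solution :: "('a \<Rightarrow> real) \<Rightarrow> 'a set \<Rightarrow> real" where
  "pf_solution b K =
     (if (\<Sum>\<^sub>\<infinity>j\<in>K. 1 / b j) > 1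
      then (THE p. 0 < p \<and> p \<le> 1 \<and> 1 / p = pf_sum b K p) else 1)"

lemma pf_root_less_one:
  assumes "(\<Sum>\<^sub>\<infinity>j\<in>K. 1 / b j) > 1" and "0 < q" "q \<le> 1" "1 / q = pf_sum b K q"
  shows "q < 1"
  using assms by (cases "q = 1") (auto simp: pf_sum_def)

lemma pf_term_increment_le:
  fixes b p q d :: real
  assumes "0 \<le> b" "0 \<le> p" "p \<le> q" "q \<le> 1 - d" "0 < d" "d \<le> 1"
  shows "1 / (1 + b - q) - 1 / (1 + b - p) \<le> (q - p) / d\<^sup>2 * (1 / (1 + b))"
proof -
  have "1 / (1 + b - q) - 1 / (1 + b - p) = (q - p) / ((1 + b - q) * (1 + b - p))"
    using assms by (simp add: field_simps)
  also have "\<dots> \<le> (q - p) / (d * (1 + b) * d)"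
  proof (rule divide_left_mono)
    have "d * b \<le> b" using assms by (intro mult_left_le_one_le) auto
    then show "d * (1 + b) * d \<le> (1 + b - q) * (1 + b - p)"
      using assms by (intro mult_mono) (auto simp: algebra_simps)
  qed (use assms in auto)
  also have "\<dots> = (q - p) / d\<^sup>2 * (1 / (1 + b))" by (simp add: power2_eq_square)
  finally show ?thesis .
qed

context
  fixes b :: "'a \<Rightarrow> real" and K :: "'a set"
  assumes b_nonneg: "\<And>j. j \<in> K \<Longrightarrow> 0 \<le> b j"
    and summable_K: "(\<lambda>j. 1 / (1 + b j)) summable_on K"
begin

lemma pf_sum_summable:
  assumes "0 \<le> p" "p < 1"
  shows "(\<lambda>j. 1 / (1 + b j - p)) summable_on K"
proof (rule summable_on_comparison_test)
  show "(\<lambda>j. 1 / (1 + b j) * (1 / (1 - p))) summable_on K"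
    by (rule summable_on_cmult_left[OF summable_K])
  fix j assume "j \<in> K"
  then have bj: "0 \<le> b j" by (rule b_nonneg)
  have "(1 + b j) * (1 - p) \<le> 1 + b j - p"
    using bj assms by (simp add: algebra_simps)
  moreover have "0 < (1 + b j) * (1 - p)" using bj assms by simp
  ultimately show "1 / (1 + b j - p) \<le> 1 / (1 + b j) * (1 / (1 - p))"
    by (simp add: divide_simps)
  show "0 \<le> 1 / (1 + b j - p)" using bj assms by simp
qed

lemma pf_term_nonneg: "j \<in> K \<Longrightarrow> p \<le> 1 \<Longrightarrow> 0 \<le> 1 / (1 + b j - p)"
  using b_nonneg[of j] by simp

lemma pf_sum_nonneg: "p \<le> 1 \<Longrightarrow> 0 \<le> pf_sum b K p"
  unfolding pf_sum_def by (intro infsum_nonneg pf_term_nonneg)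

lemma pf_sum_mono:
  assumes "0 \<le> p" "p \<le> q" "q < 1"
  shows "pf_sum b K p \<le> pf_sum b K q"
  unfolding pf_sum_def
proof (rule infsum_mono)
  show "(\<lambda>j. 1 / (1 + b j - p)) summable_on K" "(\<lambda>j. 1 / (1 + b j - q)) summable_on K"
    using pf_sum_summable assms by auto
  fix j assume "j \<in> K"
  then show "1 / (1 + b j - p) \<le> 1 / (1 + b j - q)"
    using b_nonneg[of j] assms by (intro divide_left_mono) (auto simp: mult_pos_pos)
qed


lemma pf_sum_subset_le:
  assumes "F \<subseteq> K" "0 \<le> q" "q < 1"
  shows "pf_sum b F q \<le> pf_sum b K q"
  unfolding pf_sum_def using assms pf_sum_summable pf_term_nonneg
  by (intro infsum_mono2) (auto intro: summable_on_subset)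

lemma pf_sum_lipschitz:
  assumes d: "0 < d" "d \<le> 1"
  shows "(pf_sum b K 0 / d\<^sup>2)-lipschitz_on {0..1 - d} (pf_sum b K)"
proof -
  have increment: "pf_sum b K q - pf_sum b K p \<le> pf_sum b K 0 / d\<^sup>2 * (q - p)"
    if pq: "0 \<le> p" "p \<le> q" "q \<le> 1 - d" for p q
  proof -
    define t where "t x j = 1 / (1 + b j - x)" for x j
    have sp: "t p summable_on K" "t q summable_on K" "t 0 summable_on K"
      unfolding t_def using pf_sum_summable pq d summable_K by auto
    have bnd: "t q j - t p j \<le> (q - p) / d\<^sup>2 * t 0 j" "0 \<le> t q j - t p j" if "j \<in> K" for j
    proof -
      have "0 \<le> b j" using b_nonneg[OF that] .
      then show "t q j - t p j \<le> (q - p) / d\<^sup>2 * t 0 j"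
        using pf_term_increment_le[OF _ pq d] unfolding t_def by simp
      show "0 \<le> t q j - t p j"
        using \<open>0 \<le> b j\<close> pq d unfolding t_def by (simp add: divide_left_mono)
    qed
    have sd: "(\<lambda>j. t q j - t p j) summable_on K"
      by (rule summable_on_comparison_test[OF summable_on_cmult_right[OF sp(3), of "(q - p) / d\<^sup>2"]])
        (use bnd in auto)
    have "infsum (t q) K - infsum (t p) K = infsum (\<lambda>j. t q j - t p j) K"
      using infsum_add[OF sp(1) sd] by simp
    also have "\<dots> \<le> infsum (\<lambda>j. (q - p) / d\<^sup>2 * t 0 j) K"
      by (rule infsum_mono[OF sd summable_on_cmult_right[OF sp(3)]]) (use bnd in auto)
    also have "\<dots> = (q - p) / d\<^sup>2 * infsum (t 0) K" by (rule infsum_cmult_right) (use sp in auto)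
    finally show ?thesis unfolding pf_sum_def t_def by (simp add: algebra_simps)
  qed
  show ?thesis
  proof (rule lipschitz_onI)
    show "0 \<le> pf_sum b K 0 / d\<^sup>2" using pf_sum_nonneg[of 0] by simp
    fix x y assume "x \<in> {0..1 - d}" "y \<in> {0..1 - d}"
    then show "dist (pf_sum b K x) (pf_sum b K y) \<le> pf_sum b K 0 / d\<^sup>2 * dist x y"
      using increment[of x y] increment[of y x] pf_sum_mono[of x y] pf_sum_mono[of y x] d
      by (cases "x \<le> y") (auto simp: dist_real_def)
  qed
qed

lemma continuous_on_pf_sum: "q < 1 \<Longrightarrow> continuous_on {0..q} (pf_sum b K)"
  using lipschitz_on_continuous_on[OF pf_sum_lipschitz[of "min 1 (1 - q)"]]
  by (rule continuous_on_subset) auto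

lemma pf_root_unique:
  assumes "(\<Sum>\<^sub>\<infinity>j\<in>K. 1 / b j) > 1"
    and p: "0 < p" "p \<le> 1" "1 / p = pf_sum b K p"
    and q: "0 < q" "q \<le> 1" "1 / q = pf_sum b K q"
  shows "p = q"
proof -
  have False if "0 < x" "x < y" "y < 1" "1 / x = pf_sum b K x" "1 / y = pf_sum b K y" for x y
  proof -
    have "pf_sum b K x \<le> pf_sum b K y" using pf_sum_mono[of x y] that(1-3) by simp
    moreover have "1 / y < 1 / x" using that(1,2) by (simp add: divide_strict_left_mono)
    ultimately show False using that by linarith
  qed
  moreover have "p < 1" "q < 1" using pf_root_less_one assms by blast+
  ultimately show ?thesis using p q by (cases p q rule: linorder_cases) auto
qed

lemma pf_sum_le_inverse_near_zero: "\<exists>p. 0 < p \<and> p \<le> 1/2 \<and> pf_sum b K p \<le> 1 / p"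
proof -
  define p where "p = min (1/2) (1 / (pf_sum b K (1/2) + 1))"
  have nonneg: "0 \<le> pf_sum b K (1/2)" by (rule pf_sum_nonneg) simp
  then have p: "0 < p" "p \<le> 1/2" unfolding p_def by auto
  have "pf_sum b K p \<le> pf_sum b K (1/2)" using pf_sum_mono p by auto
  also have "\<dots> \<le> 1 / p"
    using nonneg p unfolding p_def by (auto simp: min_def divide_simps)
  finally show ?thesis using p by blast
qed

lemma pf_sum_gt_inverse_near_one:
  assumes "(\<Sum>\<^sub>\<infinity>j\<in>K. 1 / b j) > 1"
  shows "\<exists>p. 1/2 < p \<and> p < 1 \<and> 1 / p < pf_sum b K p"
proof -
  have "(\<lambda>j. 1 / b j) summable_on K" using assms infsum_not_exists by fastforce
  from order_tendstoD(1)[OF infsum_tendsto[OF this] assms]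
  obtain F where F: "finite F" "F \<subseteq> K" "1 < (\<Sum>j\<in>F. 1 / b j)"
    unfolding eventually_finite_subsets_at_top by blast
  \<comment> \<open>continuity at \<open>p = 1\<close> is only available for finite subsums; terms with \<open>b j = 0\<close> add
     nothing to the condition (\<open>1 / 0 = 0\<close>) but have a pole at \<open>p = 1\<close>, so they are dropped\<close>
  define F' where "F' = {j \<in> F. b j \<noteq> 0}"
  have F': "finite F'" "F' \<subseteq> K" using F unfolding F'_def by auto
  have F'_sum: "(\<Sum>j\<in>F'. 1 / b j) = (\<Sum>j\<in>F. 1 / b j)"
    unfolding F'_def by (rule sum.mono_neutral_left) (use F in auto)
  define h where "h p = p * (\<Sum>j\<in>F'. 1 / (1 + b j - p))" for p
  have "isCont h 1" unfolding h_def by (intro continuous_intros) (auto simp: F'_def)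
  moreover have "h 1 > 1" using F F'_sum unfolding h_def by simp
  ultimately have "eventually (\<lambda>p. 1 < h p) (at_left 1)"
    by (intro order_tendstoD(1)) (auto simp: isCont_def intro: tendsto_within_subset)
  then have "eventually (\<lambda>p. 1 < h p \<and> p \<in> {1/2<..<1}) (at_left (1::real))"
    by (intro eventually_conj eventually_at_left_real) auto
  then obtain p where p: "1 < h p" "1/2 < p" "p < 1"
    using eventually_happens'[OF trivial_limit_at_left_real] by auto
  have "1 / p < (\<Sum>j\<in>F'. 1 / (1 + b j - p))"
    using p unfolding h_def by (simp add: divide_simps mult.commute)
  also have "\<dots> = pf_sum b F' p" using F' by (simp add: pf_sum_def)
  also have "\<dots> \<le> pf_sum b K p" using F' p by (intro pf_sum_subset_le) auto
  finally show ?thesis using p by blast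
qed

lemma pf_root_exists:
  assumes "(\<Sum>\<^sub>\<infinity>j\<in>K. 1 / b j) > 1"
  shows "\<exists>p. 0 < p \<and> p < 1 \<and> 1 / p = pf_sum b K p"
proof -
  obtain p0 where p0: "0 < p0" "p0 \<le> 1/2" "pf_sum b K p0 \<le> 1 / p0"
    using pf_sum_le_inverse_near_zero by blast
  obtain p1 where p1: "1/2 < p1" "p1 < 1" "1 / p1 < pf_sum b K p1"
    using pf_sum_gt_inverse_near_one[OF assms] by blast
  have "continuous_on {p0..p1} (\<lambda>x. 1 / x - pf_sum b K x)"
    using p0 p1 by (intro continuous_intros continuous_on_subset[OF continuous_on_pf_sum[OF p1(2)]]) auto
  then obtain x where "p0 \<le> x" "x \<le> p1" "1 / x - pf_sum b K x = 0"
    using IVT2'[of "\<lambda>x. 1 / x - pf_sum b K x" p1 0 p0] p0 p1 by force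
  then show ?thesis using p0 p1 by (intro exI[of _ x]) auto
qed

lemma pf_solution_root:
  assumes "(\<Sum>\<^sub>\<infinity>j\<in>K. 1 / b j) > 1"
  shows "0 < pf_solution b K" "pf_solution b K < 1"
    and "1 / pf_solution b K = pf_sum b K (pf_solution b K)"
proof -
  obtain p where p: "0 < p" "p < 1" "1 / p = pf_sum b K p" using pf_root_exists[OF assms] by blast
  have "(THE p. 0 < p \<and> p \<le> 1 \<and> 1 / p = pf_sum b K p) = p"
    using p pf_root_unique[OF assms] by (intro the_equality) auto
  then have "pf_solution b K = p" using assms unfolding pf_solution_def by simp
  then show "0 < pf_solution b K" "pf_solution b K < 1"
    and "1 / pf_solution b K = pf_sum b K (pf_solution b K)" using p by simp_all
qed

lemma pf_solution_le_one: "pf_solution b K \<le> 1"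
  using pf_solution_root by (cases "(\<Sum>\<^sub>\<infinity>j\<in>K. 1 / b j) > 1") (auto simp: pf_solution_def)

lemma pf_solution_lower_bound:
  assumes "0 < q" "q < 1" "pf_sum b K q \<le> 1 / q"
  shows "q \<le> pf_solution b K"
proof (cases "(\<Sum>\<^sub>\<infinity>j\<in>K. 1 / b j) > 1")
  case True
  note root = pf_solution_root[OF True]
  show ?thesis
  proof (rule ccontr)
    assume "\<not> q \<le> pf_solution b K"
    then have "1 / q < 1 / pf_solution b K" using root(1) by (simp add: divide_strict_left_mono)
    also have "\<dots> \<le> pf_sum b K q"
      using root pf_sum_mono[of "pf_solution b K" q] \<open>\<not> _\<close> assms by simp
    finally show False using assms by simp
  qed
qed (use assms in \<open>simp add: pf_solution_def\<close>)

lemma pf_solution_upper_bound: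
  assumes "(\<Sum>\<^sub>\<infinity>j\<in>K. 1 / b j) > 1" and "0 < q" "q < 1" "1 / q \<le> pf_sum b K q"
  shows "pf_solution b K \<le> q"
proof (rule ccontr)
  note root = pf_solution_root[OF assms(1)]
  assume "\<not> pf_solution b K \<le> q"
  then have "1 / pf_solution b K < 1 / q" using assms(2) by (simp add: divide_strict_left_mono)
  also have "\<dots> \<le> pf_sum b K (pf_solution b K)"
    using assms root pf_sum_mono[of q "pf_solution b K"] \<open>\<not> _\<close> by simp
  finally show False using root by simp
qed

end

lemma tendsto_sum_exhausting:
  assumes "\<And>n. finite (K n) \<and> K n \<subseteq> J"
    and "\<And>F. finite F \<Longrightarrow> F \<subseteq> J \<Longrightarrow> eventually (\<lambda>n. F \<subseteq> K n) sequentially"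
    and "f summable_on J"
  shows "(\<lambda>n. sum f (K n)) \<longlonglongrightarrow> infsum f J"
proof -
  have "filterlim K (finite_subsets_at_top J) sequentially"
    unfolding filterlim_finite_subsets_at_top using assms(1,2) by (auto elim: eventually_mono)
  from filterlim_compose[OF infsum_tendsto[OF assms(3)] this] show ?thesis by (simp add: o_def)
qed

lemma pf_solution_antimono:
  fixes b :: "'a \<Rightarrow> real"
  assumes b_nonneg: "\<And>j. j \<in> J \<Longrightarrow> 0 \<le> b j"
    and summable_J: "(\<lambda>j. 1 / (1 + b j)) summable_on J" "(\<lambda>j. 1 / b j) summable_on J"
    and "K \<subseteq> J"
  shows "pf_solution b J \<le> pf_solution b K"
proof (cases "(\<Sum>\<^sub>\<infinity>j\<in>J. 1 / b j) > 1")
  case True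
  note root = pf_solution_root[OF b_nonneg summable_J(1) True]
  have "pf_sum b K (pf_solution b J) \<le> pf_sum b J (pf_solution b J)"
    using root \<open>K \<subseteq> J\<close> by (intro pf_sum_subset_le[OF b_nonneg summable_J(1)]) auto
  then show ?thesis
    using root \<open>K \<subseteq> J\<close> b_nonneg summable_on_subset[OF summable_J(1) \<open>K \<subseteq> J\<close>]
    by (intro pf_solution_lower_bound) auto
next
  case False
  have "(\<Sum>\<^sub>\<infinity>j\<in>K. 1 / b j) \<le> (\<Sum>\<^sub>\<infinity>j\<in>J. 1 / b j)"
    using \<open>K \<subseteq> J\<close> b_nonneg summable_J(2)
    by (intro infsum_mono2) (auto intro: summable_on_subset)
  then show ?thesis using False by (simp add: pf_solution_def)
qed

lemma pf_solution_tendsto: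
  fixes b :: "'a \<Rightarrow> real"
  assumes b_nonneg: "\<And>j. j \<in> J \<Longrightarrow> 0 \<le> b j"
    and summable_J: "(\<lambda>j. 1 / (1 + b j)) summable_on J" "(\<lambda>j. 1 / b j) summable_on J"
    and K: "\<And>n. finite (K n) \<and> K n \<subseteq> J"
    and exhausting: "\<And>F. finite F \<Longrightarrow> F \<subseteq> J \<Longrightarrow> eventually (\<lambda>n. F \<subseteq> K n) sequentially"
  shows "(\<lambda>n. pf_solution b (K n)) \<longlonglongrightarrow> pf_solution b J"
proof (rule order_tendstoI)
  fix a assume "a < pf_solution b J"
  then show "eventually (\<lambda>n. a < pf_solution b (K n)) sequentially"
    using pf_solution_antimono[OF b_nonneg summable_J] K
    by (intro always_eventually allI) (meson less_le_trans)
next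
  fix a assume a: "pf_solution b J < a"
  have b_nonneg_K: "\<And>j. j \<in> K n \<Longrightarrow> 0 \<le> b j" and summable_K: "(\<lambda>j. 1 / (1 + b j)) summable_on K n"
    for n using K b_nonneg by auto
  show "eventually (\<lambda>n. pf_solution b (K n) < a) sequentially"
  proof (cases "(\<Sum>\<^sub>\<infinity>j\<in>J. 1 / b j) > 1")
    case False
    then have "1 < a" using a by (simp add: pf_solution_def)
    then show ?thesis
      using pf_solution_le_one[OF b_nonneg_K summable_K] by (intro always_eventually allI) (meson le_less_trans)
  next
    case True
    define p where "p = pf_solution b J"
    note root = pf_solution_root[OF b_nonneg summable_J(1) True, folded p_def]
    define q where "q = min ((p + a) / 2) ((p + 1) / 2)"
    have q: "p < q" "q < a" "q < 1" using a root unfolding q_def p_def by (auto simp: min_def)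
    have "1 / q < 1 / p" using q root(1) by (simp add: divide_strict_left_mono)
    also have "\<dots> \<le> pf_sum b J q"
      using root q pf_sum_mono[OF b_nonneg summable_J(1), of p q] by simp
    finally have gap: "1 / q < pf_sum b J q" .
    have "(\<lambda>n. pf_sum b (K n) q) \<longlonglongrightarrow> pf_sum b J q"
      using tendsto_sum_exhausting[OF K exhausting pf_sum_summable[OF b_nonneg summable_J(1)]] K q root
      unfolding pf_sum_def by simp
    then have "eventually (\<lambda>n. 1 / q < pf_sum b (K n) q) sequentially"
      using gap by (rule order_tendstoD(1))
    moreover have "eventually (\<lambda>n. 1 < (\<Sum>\<^sub>\<infinity>j\<in>K n. 1 / b j)) sequentially"
      using tendsto_sum_exhausting[OF K exhausting summable_J(2)] K True
      by (intro order_tendstoD(1)) simp_all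
    ultimately show ?thesis
    proof eventually_elim
      case (elim n)
      then have "pf_solution b (K n) \<le> q" using q root(1)
        by (intro pf_solution_upper_bound[OF b_nonneg_K summable_K]) auto
      then show ?case using q by simp
    qed
  qed
qed

lemma bcoef_nonneg: "0 \<le> T \<Longrightarrow> 0 \<le> bcoef r beta T i j"
  unfolding bcoef_def by simp

lemma norm_transmitter_le:
  assumes "0 \<le> r"
  shows "cmod (fst j) \<le> cmod (fst i - receiver r j) + cmod (fst i) + r"
proof -
  have "fst j = fst i - (fst i - receiver r j) - complex_of_real r * cis (snd j)"
    unfolding receiver_def by simp
  also have "cmod \<dots> \<le> cmod (fst i - receiver r j) + cmod (fst i) + cmod (complex_of_real r * cis (snd j))"
    by (smt (verit) norm_triangle_ineq4)
  also have "cmod (complex_of_real r * cis (snd j)) = r" using assms by (simp add: norm_mult)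
  finally show ?thesis .
qed

lemma bcoef_far:
  assumes r: "0 < r" and beta: "0 < beta" and T: "0 < T"
    and far: "2 * (cmod (fst i) + r) + 1 \<le> cmod (fst j)"
  shows "0 < bcoef r beta T i j"
    and "1 / bcoef r beta T i j \<le> T * r powr beta * 2 powr beta * (1 + cmod (fst j)) powr (-beta)"
proof -
  define x where "x = cmod (fst j)"
  define D where "D = cmod (fst i - receiver r j)"
  have x: "0 \<le> x" unfolding x_def by simp
  have "(1 + x) / 2 \<le> D"
    using norm_transmitter_le[OF less_imp_le[OF r], of j i] far unfolding x_def D_def by argo
  then have D: "0 < D" "(1 + x) powr beta / 2 powr beta \<le> D powr beta"
    using x beta by (auto simp: powr_divide[symmetric] intro: powr_mono2)
  have b: "bcoef r beta T i j = D powr beta / (T * r powr beta)"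
    unfolding bcoef_def D_def by simp
  show "0 < bcoef r beta T i j" unfolding b using D r T by simp
  have "1 / bcoef r beta T i j = T * r powr beta / D powr beta" unfolding b by simp
  also have "\<dots> \<le> T * r powr beta / ((1 + x) powr beta / 2 powr beta)"
    using D x r T by (intro divide_left_mono) auto
  also have "\<dots> = T * r powr beta * 2 powr beta * (1 + x) powr (-beta)"
    by (simp add: powr_minus_divide)
  finally show "1 / bcoef r beta T i j \<le> T * r powr beta * 2 powr beta * (1 + cmod (fst j)) powr (-beta)"
    unfolding x_def .
qed

lemma summable_on_inverse_bcoef:
  assumes r: "0 < r" and beta: "0 < beta" and T: "0 < T"
    and locally_finite: "\<And>R. finite {j \<in> S. cmod (fst j) < R}"
    and decay: "(\<lambda>j. (1 + cmod (fst j)) powr (-beta)) summable_on S"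
  shows "(\<lambda>j. 1 / bcoef r beta T i j) summable_on S"
    and "(\<lambda>j. 1 / (1 + bcoef r beta T i j)) summable_on S"
proof -
  define N where "N = {j \<in> S. cmod (fst j) < 2 * (cmod (fst i) + r) + 1}"
  define C where "C = T * r powr beta * 2 powr beta"
  have "finite N" unfolding N_def by (rule locally_finite)
  have dominated: "(\<lambda>j. C * (1 + cmod (fst j)) powr (-beta)) summable_on (S - N)"
    by (intro summable_on_cmult_right summable_on_subset[OF decay]) auto
  have far: "0 < bcoef r beta T i j" "1 / bcoef r beta T i j \<le> C * (1 + cmod (fst j)) powr (-beta)"
    if "j \<in> S - N" for j
    using bcoef_far[OF r beta T, of i j] that unfolding N_def C_def by auto
  \<comment> \<open>only the finitely many transmitters near \<open>X\<^sub>i\<close> escape the domination\<close>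
  have cofinite: "f summable_on S" if "f summable_on (S - N)" for f :: "_ \<Rightarrow> real"
    using summable_on_union[OF that summable_on_finite[of "S \<inter> N" f]] \<open>finite N\<close>
    by (simp add: Un_Diff_Int)
  show "(\<lambda>j. 1 / bcoef r beta T i j) summable_on S"
    by (intro cofinite summable_on_comparison_test[OF dominated]) (use far in \<open>auto simp: less_imp_le\<close>)
  show "(\<lambda>j. 1 / (1 + bcoef r beta T i j)) summable_on S"
  proof (intro cofinite summable_on_comparison_test[OF dominated])
    fix j assume j: "j \<in> S - N"
    have "1 / (1 + bcoef r beta T i j) \<le> 1 / bcoef r beta T i j"
      using far(1)[OF j] by (simp add: divide_left_mono)
    then show "1 / (1 + bcoef r beta T i j) \<le> C * (1 + cmod (fst j)) powr (-beta)"
      using far(2)[OF j] by linarith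
    show "0 \<le> 1 / (1 + bcoef r beta T i j)" using bcoef_nonneg[of T r beta i j] T by simp
  qed
qed

lemma pA_tendsto_pR2:
  assumes r: "0 < r" and beta: "0 < beta" and T: "0 < T"
    and locally_finite: "\<And>R. finite {j \<in> S. cmod (fst j) < R}"
    and decay: "(\<lambda>j. (1 + cmod (fst j)) powr (-beta)) summable_on S"
    and A: "incseq A" "\<And>n. bounded (A n)" "(\<Union>n. A n) = UNIV"
  shows "(\<lambda>n. pA r beta T S (A n) i) \<longlonglongrightarrow> pR2 r beta T S i"
proof -
  define J where "J = S - {i}"
  define K where "K n = {j \<in> S. fst j \<in> A n} - {i}" for n
  have K: "finite (K n) \<and> K n \<subseteq> J" for n
  proof -
    obtain R where "\<forall>x\<in>A n. norm x \<le> R" using A(2) unfolding bounded_iff by blast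
    then have "K n \<subseteq> {j \<in> S. cmod (fst j) < R + 1}" unfolding K_def by fastforce
    then show ?thesis using locally_finite finite_subset unfolding K_def J_def by blast
  qed
  have exhausting: "eventually (\<lambda>n. F \<subseteq> K n) sequentially" if "finite F" "F \<subseteq> J" for F
  proof -
    have "eventually (\<lambda>n. j \<in> K n) sequentially" if "j \<in> F" for j
    proof -
      obtain m where "fst j \<in> A m" using A(3) by blast
      then have "j \<in> K n" if "m \<le> n" for n
        using \<open>j \<in> F\<close> \<open>F \<subseteq> J\<close> monoD[OF A(1) that] unfolding K_def J_def by auto
      then show ?thesis unfolding eventually_sequentially by blast
    qed
    then have "eventually (\<lambda>n. \<forall>j\<in>F. j \<in> K n) sequentially"
      using \<open>finite F\<close> by (intro eventually_ball_finite) auto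
    then show ?thesis by (simp add: subset_eq)
  qed
  have summable: "(\<lambda>j. 1 / bcoef r beta T i j) summable_on J"
    "(\<lambda>j. 1 / (1 + bcoef r beta T i j)) summable_on J"
    using summable_on_inverse_bcoef[OF assms(1-5), of i] unfolding J_def
    by (auto intro: summable_on_subset)
  have "(\<lambda>n. pf_solution (bcoef r beta T i) (K n)) \<longlonglongrightarrow> pf_solution (bcoef r beta T i) J"
    by (rule pf_solution_tendsto[OF _ summable(2,1) K exhausting]) (use bcoef_nonneg T in auto)
  moreover have "pA r beta T S (A n) i = pf_solution (bcoef r beta T i) (K n)" for n
    using K[of n] unfolding pA_def pf_solution_def pf_sum_def Let_def K_def by simp
  moreover have "pR2 r beta T S i = pf_solution (bcoef r beta T i) J"
    unfolding pR2_def pf_solution_def pf_sum_def Let_def J_def by simp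
  ultimately show ?thesis by simp
qed

definition dyadic_disc :: "nat \<Rightarrow> (complex \<times> real) set" where
  "dyadic_disc m = {x. cmod (fst x) < 2 ^ m}"

lemma finite_norm_less_of_dyadic:
  assumes "\<And>m. finite (S \<inter> dyadic_disc m)"
  shows "finite {j \<in> S. cmod (fst j) < R}"
proof -
  obtain m where "R < 2 ^ m" using real_arch_pow[of 2 R] by auto
  then have "{j \<in> S. cmod (fst j) < R} \<subseteq> S \<inter> dyadic_disc m" unfolding dyadic_disc_def by auto
  then show ?thesis using assms finite_subset by blast
qed

lemma decay_le_dyadic_weight:
  assumes beta: "0 < beta"
  defines "\<rho> \<equiv> (2::real) powr (-beta)"
  shows "summable (\<lambda>m. \<rho> ^ m * indicator (dyadic_disc m) j)"
    and "(1 + cmod (fst j)) powr (-beta) \<le> (\<Sum>m. \<rho> ^ m * indicator (dyadic_disc m) j) / \<rho>"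
proof -
  have \<rho>: "0 < \<rho>" "\<rho> < 1" unfolding \<rho>_def using beta by (auto intro: powr_less_one)
  show summable: "summable (\<lambda>m. \<rho> ^ m * indicator (dyadic_disc m) j)"
    by (rule summable_comparison_test'[OF summable_geometric[of \<rho>]])
      (use \<rho> in \<open>auto simp: indicator_def\<close>)
  obtain k where k: "\<not> 1 + cmod (fst j) < 2 ^ k" "1 + cmod (fst j) < 2 ^ Suc k"
    using exists_least_lemma[of "\<lambda>k. 1 + cmod (fst j) < 2 ^ k"] real_arch_pow[of 2 "1 + cmod (fst j)"]
    by auto
  have "(1 + cmod (fst j)) powr (-beta) \<le> (2 powr real k) powr (-beta)"
    using k(1) beta by (intro powr_mono2') (auto simp: powr_realpow)
  also have "\<dots> = \<rho> ^ Suc k / \<rho>"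
    using \<rho> unfolding \<rho>_def by (simp add: powr_powr powr_power mult.commute)
  also have "\<rho> ^ Suc k = (\<Sum>m\<in>{Suc k}. \<rho> ^ m * indicator (dyadic_disc m) j)"
    using k(2) unfolding dyadic_disc_def by simp
  also have "\<dots> \<le> (\<Sum>m. \<rho> ^ m * indicator (dyadic_disc m) j)"
    by (rule sum_le_suminf[OF summable]) (use \<rho> in auto)
  finally show "(1 + cmod (fst j)) powr (-beta) \<le> (\<Sum>m. \<rho> ^ m * indicator (dyadic_disc m) j) / \<rho>"
    using \<rho> by (simp add: divide_right_mono)
qed

lemma decay_summable_of_dyadic:
  assumes beta: "0 < beta" and finite: "\<And>m. finite (S \<inter> dyadic_disc m)"
    and summable: "summable (\<lambda>m. (2 powr (-beta)) ^ m * real (card (S \<inter> dyadic_disc m)))"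
  shows "(\<lambda>j. (1 + cmod (fst j)) powr (-beta)) summable_on S"
proof (rule nonneg_bdd_above_summable_on)
  define \<rho> where "\<rho> = (2::real) powr (-beta)"
  have "0 < \<rho>" unfolding \<rho>_def by simp
  note weight = decay_le_dyadic_weight[OF beta, folded \<rho>_def]
  show "bdd_above (sum (\<lambda>j. (1 + cmod (fst j)) powr (-beta)) ` {F. F \<subseteq> S \<and> finite F})"
  proof (rule bdd_aboveI2)
    fix F assume "F \<in> {F. F \<subseteq> S \<and> finite F}"
    then have F: "F \<subseteq> S" "finite F" by auto
    have card: "(\<Sum>j\<in>F. \<rho> ^ m * indicator (dyadic_disc m) j) = \<rho> ^ m * real (card (F \<inter> dyadic_disc m))"
      for m using F(2) by (simp add: sum_distrib_left[symmetric] indicator_def sum.If_cases Int_def)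
    have "(\<Sum>j\<in>F. (1 + cmod (fst j)) powr (-beta)) \<le> (\<Sum>j\<in>F. \<Sum>m. \<rho> ^ m * indicator (dyadic_disc m) j) / \<rho>"
      using weight(2) by (simp add: sum_divide_distrib sum_mono)
    also have "(\<Sum>j\<in>F. \<Sum>m. \<rho> ^ m * indicator (dyadic_disc m) j) = (\<Sum>m. \<rho> ^ m * real (card (F \<inter> dyadic_disc m)))"
      using suminf_sum[of F "\<lambda>j m. \<rho> ^ m * indicator (dyadic_disc m) j", OF weight(1)]
      by (simp add: card)
    also have "\<dots> \<le> (\<Sum>m. \<rho> ^ m * real (card (S \<inter> dyadic_disc m)))"
    proof (rule suminf_le)
      show "summable (\<lambda>m. \<rho> ^ m * real (card (F \<inter> dyadic_disc m)))"
        using summable_sum[of F "\<lambda>j m. \<rho> ^ m * indicator (dyadic_disc m) j", OF weight(1)]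
        by (simp add: card)
      show "\<rho> ^ m * real (card (F \<inter> dyadic_disc m)) \<le> \<rho> ^ m * real (card (S \<inter> dyadic_disc m))" for m
        using card_mono[OF finite[of m], of "F \<inter> dyadic_disc m"] F \<open>0 < \<rho>\<close> by (intro mult_left_mono) auto
    qed (use summable in \<open>simp add: \<rho>_def\<close>)
    finally show "(\<Sum>j\<in>F. (1 + cmod (fst j)) powr (-beta)) \<le> (\<Sum>m. \<rho> ^ m * real (card (S \<inter> dyadic_disc m))) / \<rho>"
      using \<open>0 < \<rho>\<close> by (simp add: divide_right_mono)
  qed
qed simp

lemma sets_marked_intensity [simp]: "sets (marked_intensity lam) = sets borel"
  unfolding marked_intensity_def by simp

lemma dyadic_disc_borel: "dyadic_disc m \<in> sets borel"
  unfolding dyadic_disc_def by (intro borel_open open_Collect_less continuous_intros)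

lemma emeasure_marked_intensity_le:
  assumes lam: "0 \<le> lam" and E: "E \<in> sets borel" and C: "C \<in> sets borel" and "E \<subseteq> C \<times> UNIV"
  shows "emeasure (marked_intensity lam) E \<le> ennreal lam * emeasure lborel C"
proof -
  define I where "I = {0::real..<2 * pi}"
  have CI: "C \<times> I \<in> sets (lborel :: (complex \<times> real) measure)"
    using pair_measureI[of C lborel I lborel] C unfolding I_def lborel_prod by simp
  have "(\<lambda>th. ennreal (lam / (2 * pi) * indicator I th)) \<in> borel_measurable borel"
    unfolding I_def by measurable
  then have density: "(\<lambda>(x::complex, th). ennreal (lam / (2 * pi) * indicator I th)) \<in> borel_measurable lborel"
    using measurable_compose[OF borel_measurable_continuous_onI[OF continuous_on_snd[OF continuous_on_id]]]
    by (simp add: case_prod_beta' o_def)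
  have "emeasure (marked_intensity lam) E
      = (\<integral>\<^sup>+ x. ennreal (lam / (2 * pi) * indicator I (snd x)) * indicator E x \<partial>lborel)"
    unfolding marked_intensity_def I_def using E density
    by (subst emeasure_density) (auto simp: I_def case_prod_beta')
  also have "\<dots> \<le> (\<integral>\<^sup>+ x. ennreal (lam / (2 * pi)) * indicator (C \<times> I) x \<partial>lborel)"
    using \<open>E \<subseteq> C \<times> UNIV\<close> by (intro nn_integral_mono) (auto simp: indicator_def)
  also have "\<dots> = ennreal (lam / (2 * pi)) * emeasure lborel (C \<times> I)"
    by (rule nn_integral_cmult_indicator[OF CI])
  also have "emeasure lborel (C \<times> I) = emeasure lborel C * emeasure lborel I"
    using C by (subst lborel_prod[symmetric]) (simp add: lborel.emeasure_pair_measure_Times I_def)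
  also have "emeasure lborel I = ennreal (2 * pi)" unfolding I_def by simp
  also have "ennreal (lam / (2 * pi)) * (emeasure lborel C * ennreal (2 * pi)) = ennreal lam * emeasure lborel C"
    using lam by (simp add: mult_ac ennreal_mult[symmetric])
  finally show ?thesis .
qed

lemma emeasure_dyadic_disc_le:
  assumes "0 \<le> lam"
  shows "emeasure (marked_intensity lam) (dyadic_disc m) \<le> ennreal (lam * 4 ^ Suc m)"
proof -
  define R :: real where "R = 2 ^ m"
  define C where "C = cbox (Complex (-R) (-R)) (Complex R R)"
  have "dyadic_disc m \<subseteq> C \<times> UNIV"
  proof
    fix x assume "x \<in> dyadic_disc m"
    then have "cmod (fst x) < R" unfolding dyadic_disc_def R_def by simp
    then show "x \<in> C \<times> UNIV"
      using abs_Re_le_cmod[of "fst x"] abs_Im_le_cmod[of "fst x"] unfolding C_def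
      by (cases x) (auto simp: cbox_complex_eq)
  qed
  then have "emeasure (marked_intensity lam) (dyadic_disc m) \<le> ennreal lam * emeasure lborel C"
    using assms dyadic_disc_borel by (intro emeasure_marked_intensity_le) (auto simp: C_def)
  also have "emeasure lborel C = ennreal ((2 * R) * (2 * R))"
    unfolding C_def R_def by (simp add: emeasure_lborel_cbox_eq Basis_complex_def)
  also have "ennreal lam * ennreal ((2 * R) * (2 * R)) = ennreal (lam * 4 ^ Suc m)"
    using assms unfolding R_def by (simp add: ennreal_mult[symmetric] power_mult_distrib[symmetric])
  finally show ?thesis .
qed

lemma poisson_mean_sums: "(\<lambda>k. real k * (mu ^ k / fact k * exp (- mu))) sums (mu :: real)"
proof -
  define f where "f k = real k * (mu ^ k / fact k * exp (- mu))" for k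
  have "(\<lambda>n. mu * (mu ^ n / fact n) * exp (- mu)) sums (mu * exp mu * exp (- mu))"
    using exp_converges[of mu] by (intro sums_mult sums_mult2) (simp add: divide_inverse mult.commute)
  moreover have "mu * (mu ^ n / fact n) * exp (- mu) = f (Suc n)" for n
    unfolding f_def fact_Suc of_nat_mult by (simp add: field_simps del: of_nat_Suc)
  ultimately have "(\<lambda>n. f (Suc n)) sums mu" by (simp add: exp_minus field_simps)
  then have "f sums (mu + f 0)" by (simp only: sums_Suc_iff)
  then have "f sums mu" by (simp add: f_def)
  then show ?thesis by (simp only: f_def[abs_def])
qed

context
  fixes M :: "'w measure" and nu :: "'a measure" and Psi :: "'w \<Rightarrow> 'a set" and B :: "'a set"
  assumes ppp: "poisson_point_process M nu Psi"
    and B: "B \<in> sets nu" "emeasure nu B < \<infinity>"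
begin

lemma poisson_count_measurable: "(\<lambda>w. card (Psi w \<inter> B)) \<in> measurable M (count_space UNIV)"
  using ppp B unfolding poisson_point_process_def by blast

lemma AE_poisson_count_finite: "AE w in M. finite (Psi w \<inter> B)"
proof -
  have "prob_space M" using ppp unfolding poisson_point_process_def by blast
  moreover have "{w \<in> space M. finite (Psi w \<inter> B)} \<in> sets M"
    "measure M {w \<in> space M. finite (Psi w \<inter> B)} = 1"
    using ppp B unfolding poisson_point_process_def by blast+
  ultimately show ?thesis by (auto dest: prob_space.AE_prob_1)
qed

lemma nn_integral_poisson_count:
  "(\<integral>\<^sup>+w. ennreal (real (card (Psi w \<inter> B))) \<partial>M) = ennreal (measure nu B)"
proof -
  define N where "N w = card (Psi w \<inter> B)" for w
  define mu where "mu = measure nu B"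
  define level where "level k = {w \<in> space M. N w = k}" for k
  have P: "prob_space M" using ppp unfolding poisson_point_process_def by blast
  have level_sets: "level k \<in> sets M" for k
    using measurable_sets[OF poisson_count_measurable, of "{k}"]
    unfolding level_def N_def by (simp add: vimage_def Int_def conj_commute)
  \<comment> \<open>as \<open>card\<close> of an infinite set is \<open>0\<close>, for \<open>k > 0\<close> only finite intersections occur\<close>
  have level_emeasure: "ennreal (real k) * emeasure M (level k) = ennreal (real k * (mu ^ k / fact k * exp (- mu)))"
    for k
  proof (cases "k = 0")
    case False
    then have "level k = {w \<in> space M. finite (Psi w \<inter> B) \<and> card (Psi w \<inter> B) = k}"
      unfolding level_def N_def by (auto intro: card_ge_0_finite)
    then have "measure M (level k) = mu ^ k / fact k * exp (- mu)"
      using ppp B unfolding poisson_point_process_def mu_def by simp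
    then show ?thesis
      using finite_measure.emeasure_eq_measure[OF prob_space.finite_measure[OF P]]
      by (simp add: ennreal_mult[symmetric] mu_def)
  qed simp
  have "(\<integral>\<^sup>+w. ennreal (real (N w)) \<partial>M) = (\<integral>\<^sup>+w. (\<Sum>k. ennreal (real k) * indicator (level k) w) \<partial>M)"
  proof (rule nn_integral_cong)
    fix w assume "w \<in> space M"
    then have "(\<Sum>k. ennreal (real k) * indicator (level k) w) = (\<Sum>k\<in>{N w}. ennreal (real k) * indicator (level k) w)"
      by (intro suminf_finite) (auto simp: level_def)
    also have "\<dots> = ennreal (real (N w))" using \<open>w \<in> space M\<close> by (simp add: level_def)
    finally show "ennreal (real (N w)) = (\<Sum>k. ennreal (real k) * indicator (level k) w)" by simp
  qed
  also have "\<dots> = (\<Sum>k. ennreal (real k) * emeasure M (level k))"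
    using level_sets by (simp add: nn_integral_suminf nn_integral_cmult_indicator)
  also have "\<dots> = ennreal (\<Sum>k. real k * (mu ^ k / fact k * exp (- mu)))"
    unfolding level_emeasure using poisson_mean_sums[of mu]
    by (intro suminf_ennreal2) (auto simp: sums_iff mu_def)
  also have "\<dots> = ennreal mu" using poisson_mean_sums[of mu] by (simp add: sums_iff)
  finally show ?thesis unfolding N_def mu_def .
qed

end

lemma AE_summable_weighted_poisson_counts:
  assumes ppp: "poisson_point_process M nu Psi"
    and B: "\<And>m. B m \<in> sets nu" "\<And>m. emeasure nu (B m) < \<infinity>"
    and c: "\<And>m. 0 \<le> c m" and summable: "summable (\<lambda>m. c m * measure nu (B m))"
  shows "AE w in M. summable (\<lambda>m. c m * real (card (Psi w \<inter> B m)))"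
proof -
  define G where "G w = (\<Sum>m. ennreal (c m * real (card (Psi w \<inter> B m))))" for w
  have count_measurable: "(\<lambda>w. real (card (Psi w \<inter> B m))) \<in> borel_measurable M" for m
    using measurable_compose[OF poisson_count_measurable[OF ppp B(1,2)], of real borel]
    by (simp add: o_def)
  then have term_measurable: "(\<lambda>w. ennreal (c m * real (card (Psi w \<inter> B m)))) \<in> borel_measurable M" for m
    by measurable
  have "integral\<^sup>N M G = (\<Sum>m. \<integral>\<^sup>+w. ennreal (c m * real (card (Psi w \<inter> B m))) \<partial>M)"
    unfolding G_def by (rule nn_integral_suminf[OF term_measurable])
  also have "\<dots> = (\<Sum>m. \<integral>\<^sup>+w. ennreal (c m) * ennreal (real (card (Psi w \<inter> B m))) \<partial>M)"
    using c by (simp add: ennreal_mult)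
  also have "\<dots> = (\<Sum>m. ennreal (c m * measure nu (B m)))"
    using c count_measurable
    by (simp add: nn_integral_cmult nn_integral_poisson_count[OF ppp B(1,2)] ennreal_mult)
  also have "\<dots> = ennreal (\<Sum>m. c m * measure nu (B m))"
    using summable c by (intro suminf_ennreal2) auto
  finally have "integral\<^sup>N M G \<noteq> \<infinity>" by simp
  moreover have "G \<in> borel_measurable M"
    unfolding G_def by (intro borel_measurable_suminf_order term_measurable)
  ultimately have "AE w in M. G w \<noteq> \<infinity>"
    by (intro nn_integral_noteq_infinite)
  then show ?thesis
    by (rule AE_mp) (use c in \<open>auto simp: G_def intro!: AE_I2 summable_suminf_not_top\<close>)
qed


lemma summable_weighted_dyadic_intensity:
  assumes lam: "0 \<le> lam" and beta: "2 < beta"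
  shows "summable (\<lambda>m. (2 powr (-beta)) ^ m * measure (marked_intensity lam) (dyadic_disc m))"
proof (rule summable_comparison_test')
  have "4 * 2 powr (-beta) = (2::real) powr (2 - beta)" by (simp add: powr_diff powr_minus_divide)
  also have "\<dots> < 1" using beta by (intro powr_less_one) auto
  finally show "summable (\<lambda>m. 4 * lam * (4 * 2 powr (-beta)) ^ m)"
    by (intro summable_mult summable_geometric) simp
  fix m
  have "measure (marked_intensity lam) (dyadic_disc m) \<le> lam * 4 ^ Suc m"
    unfolding measure_def using lam emeasure_dyadic_disc_le[OF lam] by (intro enn2real_leI) auto
  then show "norm ((2 powr (-beta)) ^ m * measure (marked_intensity lam) (dyadic_disc m))
      \<le> 4 * lam * (4 * 2 powr (-beta)) ^ m"
    by (simp add: mult_left_mono power_mult_distrib mult_ac)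
qed

theorem mainTheorem3:
  fixes M :: "'w measure" and Psi :: "'w \<Rightarrow> (complex \<times> real) set"
    and lam r beta T :: real
  assumes "0 < lam" and "0 < r" and "2 < beta" and "0 < T"
    and "poisson_point_process M (marked_intensity lam) Psi"
  shows "AE w in M. \<forall>i \<in> Psi w. \<forall>A :: nat \<Rightarrow> complex set.
           (incseq A \<and> (\<forall>n. bounded (A n)) \<and> (\<Union>n. A n) = UNIV) \<longrightarrow>
           (\<lambda>n. pA r beta T (Psi w) (A n) i) \<longlonglongrightarrow> pR2 r beta T (Psi w) i"
proof -
  note ppp = assms(5)
  have beta: "0 < beta" using assms(3) by simp
  have disc: "dyadic_disc m \<in> sets (marked_intensity lam)"
    "emeasure (marked_intensity lam) (dyadic_disc m) < \<infinity>" for m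
    using dyadic_disc_borel emeasure_dyadic_disc_le[of lam m] assms(1) by (auto intro: le_less_trans)
  have "AE w in M. \<forall>m. finite (Psi w \<inter> dyadic_disc m)"
    using AE_poisson_count_finite[OF ppp disc] by (simp add: AE_all_countable)
  moreover have "AE w in M. summable (\<lambda>m. (2 powr (-beta)) ^ m * real (card (Psi w \<inter> dyadic_disc m)))"
    using assms(1,3) by (intro AE_summable_weighted_poisson_counts[OF ppp disc]
        summable_weighted_dyadic_intensity) auto
  ultimately show ?thesis
  proof eventually_elim
    case (elim w)
    then show ?case
      using pA_tendsto_pR2[OF assms(2) beta assms(4) finite_norm_less_of_dyadic
          decay_summable_of_dyadic[OF beta]]
      by blast
  qed
qed

end
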